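(* Let $M\ge1$ and let $\tau\in\mathbb{R}^{M+2}_{>0}$ be an $(M+1)$-layer travel time vector such that the set $$S=\{k\in\mathfrak{L}^\tau_{M+1}: k\neq k^{M+1},\ \langle k,\tau\rangle=\langle k^{M+1},\tau\rangle\}$$ is nonempty, where $k^{M+1}=(1,\ldots,1)\in\mathbb{Z}^{M+2}$. Let $\mathcal{R}$ be the set of all $(R_0,\ldots,R_M)\in(-1,1)^{M+1}$ for which there exists a nonzero $R_{M+1}\in(-1,1)$ such that, with $R'=(R_0,\ldots,R_{M+1})$, $$a(R',k^{M+1})+\sum_{k\in S}a(R',k)=0.$$ Then $\mathcal{R}$ has strictly positive Lebesgue measure in $\mathbb{R}^{M+1}$.
   Context: For $N\ge1$, $\mathfrak{L}_N\subset\mathbb{Z}^{N+1}_{\geq0}$ is the set of $k=(k_0,\ldots,k_N)$ with $k_0=1$ such that $k_n>0\Rightarrow k_{n-1}>0$ for $1\le n\le N$; for $\tau\in\mathbb{R}^{N+1}_{>0}$, $\mathfrak{L}^\tau_N=\{k\in\mathfrak{L}_N:\langle k,\tau\rangle\le\langle\mathbb{1},\tau\rangle\}$. Amplitude polynomial (for $k\in\mathfrak{L}_N$, $x=(x_0,\ldots,x_N)$): $\mathbb{1}=(1,\ldots,1)$; inequalities and $\min$ entrywise; $x^k=\prod_n x_n^{k_n}$, $\binom{k}{b}=\prod_n\binom{k_n}{b_n}$; $\tilde k=(k_1,\ldots,k_N,0)$, $u=\min\{\mathbb{1},\tilde k\}$, $V(k)=\{b:u\le b\le\min\{k,\tilde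 k\}\}$, $a(x,k)=\sum_{b\in V(k)}\binom{k}{b}\binom{\tilde k-u}{b-u}(-x)^{\tilde k-b}x^{k-b}\prod_n(1-x_n^2)^{b_n}$. *)

theory Defs
  imports "HOL-Analysis.Analysis"
begin

text \<open>Integer vectors k = (k_0,...,k_N) are represented as functions nat => nat
  that vanish beyond index N; real vectors x = (x_0,...,x_N) as functions nat => real
  of which only the entries 0..N are used.\<close>

definition Lset :: "nat \<Rightarrow> (nat \<Rightarrow> nat) set" where
  "Lset N = {k. k 0 = 1 \<and> (\<forall>n. 1 \<le> n \<and> n \<le> N \<and> k n > 0 \<longrightarrow> k (n - 1) > 0)
               \<and> (\<forall>n>N. k n = 0)}"

definition ip :: "nat \<Rightarrow> (nat \<Rightarrow> nat) \<Rightarrow> (nat \<Rightarrow> real) \<Rightarrow> real" where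
  "ip N k \<tau> = (\<Sum>n\<le>N. real (k n) * \<tau> n)"

definition onevec :: "nat \<Rightarrow> nat \<Rightarrow> nat" where
  "onevec N = (\<lambda>n. if n \<le> N then 1 else 0)"

definition Ltau :: "nat \<Rightarrow> (nat \<Rightarrow> real) \<Rightarrow> (nat \<Rightarrow> nat) set" where
  "Ltau N \<tau> = {k \<in> Lset N. ip N k \<tau> \<le> ip N (onevec N) \<tau>}"

definition ktilde :: "nat \<Rightarrow> (nat \<Rightarrow> nat) \<Rightarrow> nat \<Rightarrow> nat" where
  "ktilde N k = (\<lambda>n. if n < N then k (n + 1) else 0)"

definition uvec :: "nat \<Rightarrow> (nat \<Rightarrow> nat) \<Rightarrow> nat \<Rightarrow> nat" where
  "uvec N k = (\<lambda>n. min 1 (ktilde N k n))"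

definition Vset :: "nat \<Rightarrow> (nat \<Rightarrow> nat) \<Rightarrow> (nat \<Rightarrow> nat) set" where
  "Vset N k = {b. (\<forall>n\<le>N. uvec N k n \<le> b n \<and> b n \<le> min (k n) (ktilde N k n))
                 \<and> (\<forall>n>N. b n = 0)}"

definition amp :: "nat \<Rightarrow> (nat \<Rightarrow> real) \<Rightarrow> (nat \<Rightarrow> nat) \<Rightarrow> real" where
  "amp N x k = (\<Sum>b\<in>Vset N k. \<Prod>n\<le>N.
      real (k n choose b n) * real ((ktilde N k n - uvec N k n) choose (b n - uvec N k n))
      * (- x n) ^ (ktilde N k n - b n) * x n ^ (k n - b n) * (1 - (x n)\<^sup>2) ^ (b n))"

definition Sset :: "nat \<Rightarrow> (nat \<Rightarrow> real) \<Rightarrow> (nat \<Rightarrow> nat) set" where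
  "Sset M \<tau> = {k \<in> Ltau (M + 1) \<tau>. k \<noteq> onevec (M + 1)
                 \<and> ip (M + 1) k \<tau> = ip (M + 1) (onevec (M + 1)) \<tau>}"

definition Rset :: "nat \<Rightarrow> (nat \<Rightarrow> real) \<Rightarrow> (nat \<Rightarrow> real) set" where
  "Rset M \<tau> = {R \<in> PiE {..M} (\<lambda>_. UNIV). (\<forall>i\<le>M. \<bar>R i\<bar> < 1) \<and>
     (\<exists>r. r \<noteq> 0 \<and> \<bar>r\<bar> < 1 \<and>
        amp (M + 1) (R(M + 1 := r)) (onevec (M + 1))
        + (\<Sum>k\<in>Sset M \<tau>. amp (M + 1) (R(M + 1 := r)) k) = 0)}"

definition lebM :: "nat \<Rightarrow> (nat \<Rightarrow> real) measure" where
  "lebM M = completion (Pi\<^sub>M {..M} (\<lambda>_. lborel))"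

end

theory Submission
  imports Defs
begin

(* Write R' = R(M+1 := r).  Every k in S has k_{M+1} = 0: otherwise the
   chain condition forces all k_n > 0, and <k,tau> = <1,tau> with tau > 0 then forces
   k = 1.  Hence a(R',k) does not depend on r for k in S, while a(R',1) = r * P(R) with
   P(R) = prod_{n<=M} (1 - R_n^2) > 0.  The defining equation r * P(R) + C(R) = 0 is
   solvable with 0 < |r| < 1 iff C(R) <> 0 and |C(R)| < P(R), so the set in question is
   the trace of an open set Good on the (extensional) function space {..M} -> real.
   An open set containing an extensional point contains a box of positive product
   measure, so it remains to find one point of Good.  On the diagonal R = (t,...,t) the sum
   C is a finite sum of terms c * (-1)^s * t^(2s+1) * (1-t^2)^e with c > 0; dividing by
   the lowest power t^(2m+1) leaves a function which is nonzero at t = 0, so for small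
   t > 0 the sum is nonzero and smaller than (1-t^2)^(M+1). *)

section \<open>Combinatorics of the index sets\<close>

lemma Lset_all_pos:
  assumes k: "k \<in> Lset N" and kN: "k N > 0"
  shows "\<forall>n\<le>N. k n > 0"
proof -
  have "k (N - j) > 0" for j
  proof (induction j)
    case 0
    then show ?case using kN by simp
  next
    case (Suc j)
    show ?case
    proof (cases "N - j \<ge> 1")
      case True
      then have "k (N - j - 1) > 0" using k Suc.IH unfolding Lset_def by auto
      then show ?thesis by (simp add: diff_Suc diff_diff_add)
    next
      case False
      then show ?thesis using Suc.IH by (simp add: Suc_diff_le)
    qed
  qed
  then show ?thesis by (metis diff_diff_cancel)
qed

text \<open>The vectors of \<open>S\<close> all vanish in the last layer; this is what makes the
  amplitudes \<open>a(R',k)\<close>, \<open>k \<in> S\<close>, independent of \<open>R_{M+1}\<close>.\<close>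

lemma Sset_last_zero:
  assumes tau: "\<forall>n\<le>M + 1. \<tau> n > 0" and k: "k \<in> Sset M \<tau>"
  shows "k (M + 1) = 0"
proof (rule ccontr)
  assume "k (M + 1) \<noteq> 0"
  have kL: "k \<in> Lset (M + 1)" using k unfolding Sset_def Ltau_def by auto
  have pos: "\<forall>n\<le>M + 1. k n > 0" using Lset_all_pos[OF kL] \<open>k (M + 1) \<noteq> 0\<close> by auto
  have "(\<Sum>n\<le>M + 1. (real (k n) - 1) * \<tau> n) = 0"
    using k unfolding Sset_def ip_def onevec_def by (simp add: sum_subtractf left_diff_distrib)
  moreover have "\<forall>n\<in>{..M + 1}. 0 \<le> (real (k n) - 1) * \<tau> n"
    using pos tau by (auto simp: Suc_le_eq)
  ultimately have "\<forall>n\<in>{..M + 1}. (real (k n) - 1) * \<tau> n = 0"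
    by (subst (asm) sum_nonneg_eq_0_iff) auto
  then have "\<forall>n\<le>M + 1. k n = 1" using tau by force
  moreover have "\<forall>n>M + 1. k n = 0" using kL unfolding Lset_def by auto
  ultimately have "k = onevec (M + 1)" unfolding onevec_def by (auto simp: not_le)
  then show False using k unfolding Sset_def by auto
qed

lemma finite_bounded_vectors:
  "finite {f :: nat \<Rightarrow> nat. (\<forall>n\<le>N. f n \<le> B) \<and> (\<forall>n>N. f n = 0)}"
  by (rule finite_subset[OF _ finite_set_of_finite_funs[of "{..N}" "{..B}" 0]])
     (auto simp: not_le)

text \<open>\<open>S\<close> is finite, since \<open><k,\<tau>> = <1,\<tau>>\<close> bounds every entry of \<open>k\<close>.\<close>

lemma Sset_finite:
  assumes tau: "\<forall>n\<le>M + 1. \<tau> n > 0"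
  shows "finite (Sset M \<tau>)"
proof -
  define T where "T = (\<Sum>n\<le>M + 1. \<tau> n)"
  define m where "m = Min (\<tau> ` {..M + 1})"
  have mpos: "m > 0" unfolding m_def using tau by auto
  have mle: "m \<le> \<tau> n" if "n \<le> M + 1" for n unfolding m_def using that by auto
  define B where "B = nat \<lfloor>T / m\<rfloor>"
  have "Sset M \<tau> \<subseteq> {f. (\<forall>n\<le>M + 1. f n \<le> B) \<and> (\<forall>n>M + 1. f n = 0)}"
  proof (intro subsetI CollectI conjI allI impI)
    fix k assume k: "k \<in> Sset M \<tau>"
    have kL: "k \<in> Lset (M + 1)" using k unfolding Sset_def Ltau_def by auto
    then show "k n = 0" if "n > M + 1" for n using that unfolding Lset_def by auto
    have eq: "(\<Sum>n\<le>M + 1. real (k n) * \<tau> n) = T"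
      using k unfolding Sset_def ip_def onevec_def T_def by auto
    fix n assume n: "n \<le> M + 1"
    have "real (k n) * m \<le> real (k n) * \<tau> n" using mle[OF n] by (simp add: mult_left_mono)
    also have "\<dots> \<le> (\<Sum>n\<le>M + 1. real (k n) * \<tau> n)"
      by (rule member_le_sum) (use n tau in \<open>auto simp: less_imp_le\<close>)
    finally have "real (k n) \<le> T / m" using mpos eq by (simp add: field_simps)
    then show "k n \<le> B" unfolding B_def by (simp add: le_nat_floor)
  qed
  then show ?thesis using finite_bounded_vectors finite_subset by blast
qed

lemma Vset_finite: "finite (Vset N k)"
proof -
  have "Vset N k \<subseteq> {f. (\<forall>n\<le>N. f n \<le> Max (k ` {..N})) \<and> (\<forall>n>N. f n = 0)}"
    unfolding Vset_def by (auto intro: le_trans[OF _ Max_ge])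
  then show ?thesis using finite_bounded_vectors finite_subset by blast
qed

lemma uvec_in_Vset:
  assumes k: "k \<in> Lset N"
  shows "uvec N k \<in> Vset N k"
proof -
  have "uvec N k n \<le> k n" if "n \<le> N" for n
    using k that unfolding Lset_def uvec_def ktilde_def by (auto elim!: allE[of _ "n + 1"])
  then show ?thesis unfolding Vset_def by (auto simp: uvec_def ktilde_def)
qed

section \<open>The amplitude polynomial\<close>

lemma amp_onevec: "amp N x (onevec N) = x N * (\<Prod>n<N. 1 - (x n)\<^sup>2)"
proof -
  define b0 where "b0 = (\<lambda>n. if n < N then 1 else (0::nat))"
  have V: "Vset N (onevec N) = {b0}"
  proof (intro set_eqI iffI)
    fix b assume b: "b \<in> Vset N (onevec N)"
    have "b n = b0 n" for n
      using b unfolding Vset_def uvec_def ktilde_def onevec_def b0_def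
      by (cases "n < N"; cases "n = N") (auto elim!: allE[of _ n])
    then show "b \<in> {b0}" by auto
  qed (auto simp: Vset_def uvec_def ktilde_def onevec_def b0_def)
  have "amp N x (onevec N) = (\<Prod>n<Suc N.
      real (onevec N n choose b0 n)
      * real ((ktilde N (onevec N) n - uvec N (onevec N) n) choose (b0 n - uvec N (onevec N) n))
      * (- x n) ^ (ktilde N (onevec N) n - b0 n) * x n ^ (onevec N n - b0 n)
      * (1 - (x n)\<^sup>2) ^ (b0 n))"
    unfolding amp_def V by (simp add: lessThan_Suc_atMost)
  also have "\<dots> = (\<Prod>n<N. 1 - (x n)\<^sup>2) * x N"
    unfolding prod.lessThan_Suc
    by (auto intro!: prod.cong simp: b0_def onevec_def ktilde_def uvec_def)
  finally show ?thesis by simp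
qed

lemma amp_indep_last:
  assumes kN: "k N = 0" and xy: "\<forall>n<N. x n = y n"
  shows "amp N x k = amp N y k"
  unfolding amp_def
proof (intro sum.cong refl prod.cong)
  fix b n assume b: "b \<in> Vset N k" and n: "n \<in> {..N}"
  have "b N = 0" using b kN unfolding Vset_def by (auto elim!: allE[of _ N])
  then show "real (k n choose b n) * real ((ktilde N k n - uvec N k n) choose (b n - uvec N k n)) *
       (- x n) ^ (ktilde N k n - b n) * x n ^ (k n - b n) * (1 - (x n)\<^sup>2) ^ b n =
       real (k n choose b n) * real ((ktilde N k n - uvec N k n) choose (b n - uvec N k n)) *
       (- y n) ^ (ktilde N k n - b n) * y n ^ (k n - b n) * (1 - (y n)\<^sup>2) ^ b n"
    using n xy kN by (cases "n < N") (auto simp: ktilde_def)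
qed

text \<open>Coefficient, sign exponent and exponent of \<open>1 - t^2\<close> of the term indexed by \<open>b\<close>
  in \<open>a((t,\<dots>,t),k)\<close>.\<close>

definition coef :: "nat \<Rightarrow> (nat \<Rightarrow> nat) \<Rightarrow> (nat \<Rightarrow> nat) \<Rightarrow> real" where
  "coef N k b = (\<Prod>n\<le>N. real (k n choose b n)
                   * real ((ktilde N k n - uvec N k n) choose (b n - uvec N k n)))"

definition sign_exp :: "nat \<Rightarrow> (nat \<Rightarrow> nat) \<Rightarrow> (nat \<Rightarrow> nat) \<Rightarrow> nat" where
  "sign_exp N k b = (\<Sum>n\<le>N. ktilde N k n - b n)"

definition trans_exp :: "nat \<Rightarrow> (nat \<Rightarrow> nat) \<Rightarrow> nat" where
  "trans_exp N b = (\<Sum>n\<le>N. b n)"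

text \<open>All coefficients are positive binomial products, because \<open>u \<le> b \<le> min k k~\<close>.\<close>

lemma coef_pos: "b \<in> Vset N k \<Longrightarrow> coef N k b > 0"
  unfolding coef_def Vset_def
  by (rule prod_pos) (auto simp: zero_less_binomial_iff intro!: diff_le_mono)

text \<open>Since \<open>k_0 = 1\<close> we have \<open>|k| = 1 + |k~|\<close>; hence the total power of \<open>t\<close> in each
  term of \<open>a((t,\<dots>,t),k)\<close> is odd.\<close>

lemma total_degree_odd:
  assumes k: "k \<in> Lset N" and b: "b \<in> Vset N k"
  shows "(\<Sum>n\<le>N. ktilde N k n - b n + (k n - b n)) = 2 * sign_exp N k b + 1"
proof -
  have bk: "b n \<le> k n" "b n \<le> ktilde N k n" if "n \<le> N" for n
    using b that unfolding Vset_def by auto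
  have s1: "(\<Sum>n\<le>N. k n - b n) + trans_exp N b = (\<Sum>n\<le>N. k n)"
    unfolding trans_exp_def sum.distrib[symmetric] by (rule sum.cong) (use bk in auto)
  have s2: "sign_exp N k b + trans_exp N b = (\<Sum>n\<le>N. ktilde N k n)"
    unfolding trans_exp_def sign_exp_def sum.distrib[symmetric] by (rule sum.cong) (use bk in auto)
  have "k 0 = 1" using k unfolding Lset_def by auto
  then have s3: "(\<Sum>n\<le>N. k n) = 1 + (\<Sum>n<N. k (Suc n))"
    unfolding lessThan_Suc_atMost[symmetric] sum.lessThan_Suc_shift by simp
  have s4: "(\<Sum>n\<le>N. ktilde N k n) = (\<Sum>n<N. k (Suc n))"
    unfolding lessThan_Suc_atMost[symmetric] sum.lessThan_Suc by (simp add: ktilde_def)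
  have "(\<Sum>n\<le>N. ktilde N k n - b n + (k n - b n)) = sign_exp N k b + (\<Sum>n\<le>N. k n - b n)"
    unfolding sign_exp_def sum.distrib by simp
  then show ?thesis using s1 s2 s3 s4 by linarith
qed

lemma amp_diagonal:
  assumes k: "k \<in> Lset N"
  shows "amp N (\<lambda>_. t) k = (\<Sum>b\<in>Vset N k. coef N k b * (-1) ^ sign_exp N k b
            * t ^ (2 * sign_exp N k b + 1) * (1 - t\<^sup>2) ^ trans_exp N b)"
  unfolding amp_def
proof (rule sum.cong[OF refl])
  fix b assume b: "b \<in> Vset N k"
  have "(\<Prod>n\<le>N. real (k n choose b n) * real ((ktilde N k n - uvec N k n) choose (b n - uvec N k n))
      * (- t) ^ (ktilde N k n - b n) * t ^ (k n - b n) * (1 - t\<^sup>2) ^ (b n))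
    = (\<Prod>n\<le>N. (real (k n choose b n) * real ((ktilde N k n - uvec N k n) choose (b n - uvec N k n)))
      * (-1) ^ (ktilde N k n - b n) * t ^ (ktilde N k n - b n + (k n - b n)) * (1 - t\<^sup>2) ^ (b n))"
    by (rule prod.cong[OF refl]) (simp add: power_minus[of t] power_add)
  also have "\<dots> = coef N k b * (-1) ^ sign_exp N k b
      * t ^ (\<Sum>n\<le>N. ktilde N k n - b n + (k n - b n)) * (1 - t\<^sup>2) ^ trans_exp N b"
    unfolding coef_def sign_exp_def trans_exp_def prod.distrib power_sum by simp
  finally show "(\<Prod>n\<le>N. real (k n choose b n) * real ((ktilde N k n - uvec N k n) choose (b n - uvec N k n))
      * (- t) ^ (ktilde N k n - b n) * t ^ (k n - b n) * (1 - t\<^sup>2) ^ (b n))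
     = coef N k b * (-1) ^ sign_exp N k b * t ^ (2 * sign_exp N k b + 1) * (1 - t\<^sup>2) ^ trans_exp N b"
    by (simp only: total_degree_odd[OF k b])
qed

section \<open>Reduction to an open condition\<close>

text \<open>\<open>C(R)\<close>: the contribution of \<open>S\<close>, which does not depend on \<open>R_{M+1}\<close>;
  \<open>P(R)\<close>: the transmission product of the first \<open>M+1\<close> layers.\<close>

definition S_amp :: "nat \<Rightarrow> (nat \<Rightarrow> real) \<Rightarrow> (nat \<Rightarrow> real) \<Rightarrow> real" where
  "S_amp M \<tau> R = (\<Sum>k\<in>Sset M \<tau>. amp (M + 1) (R(M + 1 := 0)) k)"

definition transm :: "nat \<Rightarrow> (nat \<Rightarrow> real) \<Rightarrow> real" where
  "transm M R = (\<Prod>n\<le>M. 1 - (R n)\<^sup>2)"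

text \<open>The coefficient vectors for which the equation has a solution \<open>0 < |r| < 1\<close>.\<close>

definition Good :: "nat \<Rightarrow> (nat \<Rightarrow> real) \<Rightarrow> (nat \<Rightarrow> real) set" where
  "Good M \<tau> = {R. (\<forall>i\<le>M. \<bar>R i\<bar> < 1) \<and> S_amp M \<tau> R \<noteq> 0 \<and> \<bar>S_amp M \<tau> R\<bar> < transm M R}"

lemma transm_pos: "\<forall>i\<le>M. \<bar>R i\<bar> < 1 \<Longrightarrow> transm M R > 0"
  unfolding transm_def by (rule prod_pos) (auto simp: abs_square_less_1)

lemma amp_equation_affine:
  assumes tau: "\<forall>n\<le>M + 1. \<tau> n > 0"
  shows "amp (M + 1) (R(M + 1 := r)) (onevec (M + 1))
        + (\<Sum>k\<in>Sset M \<tau>. amp (M + 1) (R(M + 1 := r)) k) = r * transm M R + S_amp M \<tau> R"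
proof -
  have "amp (M + 1) (R(M + 1 := r)) (onevec (M + 1)) = r * transm M R"
    unfolding amp_onevec transm_def by (simp add: lessThan_Suc_atMost[symmetric])
  moreover have "(\<Sum>k\<in>Sset M \<tau>. amp (M + 1) (R(M + 1 := r)) k) = S_amp M \<tau> R"
    unfolding S_amp_def
    by (rule sum.cong[OF refl], rule amp_indep_last) (use Sset_last_zero[OF tau] in auto)
  ultimately show ?thesis by simp
qed

lemma Rset_eq_Good:
  assumes tau: "\<forall>n\<le>M + 1. \<tau> n > 0"
  shows "Rset M \<tau> = Good M \<tau> \<inter> PiE {..M} (\<lambda>_. UNIV)"
proof -
  have solvable: "(\<exists>r. r \<noteq> 0 \<and> \<bar>r\<bar> < 1 \<and> r * transm M R + S_amp M \<tau> R = 0)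
        \<longleftrightarrow> S_amp M \<tau> R \<noteq> 0 \<and> \<bar>S_amp M \<tau> R\<bar> < transm M R"
    if R: "\<forall>i\<le>M. \<bar>R i\<bar> < 1" for R
  proof -
    have P: "transm M R > 0" using transm_pos[OF R] .
    have "r * transm M R + S_amp M \<tau> R = 0 \<longleftrightarrow> r = - S_amp M \<tau> R / transm M R" for r
      using P by (auto simp: field_simps)
    moreover have "\<bar>S_amp M \<tau> R / transm M R\<bar> < 1 \<longleftrightarrow> \<bar>S_amp M \<tau> R\<bar> < transm M R"
      using P by (simp add: divide_less_eq)
    ultimately show ?thesis using P by auto
  qed
  show ?thesis
  proof (intro set_eqI)
    fix R
    show "R \<in> Rset M \<tau> \<longleftrightarrow> R \<in> Good M \<tau> \<inter> PiE {..M} (\<lambda>_. UNIV)"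
      unfolding Rset_def Good_def amp_equation_affine[OF tau] using solvable[of R] by blast
  qed
qed

text \<open>Coordinates of \<open>R(j := c)\<close> are continuous and measurable in \<open>R\<close>; with these rules the
  automation handles \<open>C\<close>, which evaluates the amplitudes at \<open>R(M+1 := 0)\<close>.\<close>

lemma continuous_on_upd_coordinate [continuous_intros]:
  "continuous_on UNIV (\<lambda>R::'i \<Rightarrow> real. (R(j := c)) n)"
  by (cases "n = j") simp_all

lemma measurable_upd_coordinate [measurable]:
  "(\<lambda>R::'i \<Rightarrow> real. (R(j := c)) n) \<in> borel_measurable (PiM I (\<lambda>_. lborel))"
proof -
  consider "n = j" | "n \<noteq> j" "n \<in> I" | "n \<noteq> j" "n \<notin> I" by blast
  then show ?thesis
  proof cases
    case 3
    then have "(R(j := c)) n = undefined" if "R \<in> space (PiM I (\<lambda>_. lborel))" for R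
      using that by (auto simp: space_PiM PiE_def extensional_def)
    then show ?thesis by (subst measurable_cong[where g = "\<lambda>_. undefined"]) auto
  qed simp_all
qed

text \<open>\<open>C\<close> and \<open>P\<close> are polynomials in the coordinates, hence continuous and measurable,
  so \<open>Good\<close> is open and \<open>\<R>\<close> is measurable.\<close>

lemma S_amp_continuous: "continuous_on UNIV (S_amp M \<tau>)"
  unfolding S_amp_def[abs_def] amp_def by (intro continuous_intros)

lemma transm_continuous: "continuous_on UNIV (transm M)"
  unfolding transm_def[abs_def] by (intro continuous_intros continuous_on_product_coordinates)

lemma open_Good: "open (Good M \<tau>)"
proof -
  have "Good M \<tau> = (\<Inter>i\<in>{..M}. {R. \<bar>R i\<bar> < 1}) \<inter> {R. S_amp M \<tau> R \<noteq> 0}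
                    \<inter> {R. \<bar>S_amp M \<tau> R\<bar> < transm M R}"
    unfolding Good_def by auto
  moreover have "open {R :: nat \<Rightarrow> real. \<bar>R i\<bar> < 1}" for i
    by (intro open_Collect_less continuous_intros continuous_on_product_coordinates)
  moreover have "open {R. S_amp M \<tau> R \<noteq> 0}"
    by (intro open_Collect_neq S_amp_continuous continuous_on_const)
  moreover have "open {R. \<bar>S_amp M \<tau> R\<bar> < transm M R}"
    by (intro open_Collect_less continuous_on_rabs S_amp_continuous transm_continuous)
  ultimately show ?thesis by (simp add: open_Int open_INT)
qed

lemma S_amp_measurable [measurable]: "S_amp M \<tau> \<in> borel_measurable (PiM {..M} (\<lambda>_. lborel))"
  unfolding S_amp_def amp_def by measurable

lemma transm_measurable [measurable]: "transm M \<in> borel_measurable (PiM {..M} (\<lambda>_. lborel))"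
  unfolding transm_def by measurable

lemma Rset_measurable:
  assumes tau: "\<forall>n\<le>M + 1. \<tau> n > 0"
  shows "Rset M \<tau> \<in> sets (PiM {..M} (\<lambda>_. lborel))"
proof -
  have "Rset M \<tau> = {R \<in> space (PiM {..M} (\<lambda>_. lborel)).
          (\<forall>i\<le>M. \<bar>R i\<bar> < 1) \<and> S_amp M \<tau> R \<noteq> 0 \<and> \<bar>S_amp M \<tau> R\<bar> < transm M R}"
    unfolding Rset_eq_Good[OF tau] Good_def by (auto simp: space_PiM)
  also have "\<dots> \<in> sets (PiM {..M} (\<lambda>_. lborel))" by measurable
  finally show ?thesis .
qed

section \<open>Open sets have positive product measure\<close>

lemma open_contains_positive_box:
  fixes U :: "('i \<Rightarrow> real) set"
  assumes I: "finite I" and U: "open U" "x \<in> U" and x: "x \<in> PiE I (\<lambda>_. UNIV)"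
  shows "\<exists>B\<in>sets (PiM I (\<lambda>_. lborel)). B \<subseteq> U \<and> emeasure (PiM I (\<lambda>_. lborel)) B > 0"
proof -
  have "openin (product_topology (\<lambda>i. euclidean) UNIV) U" using U(1) by (simp add: open_fun_def)
  from product_topology_open_contains_basis[OF this U(2)]
  obtain X where X: "x \<in> PiE UNIV X" "\<forall>i. openin euclidean (X i)" "PiE UNIV X \<subseteq> U"
    by blast
  have "\<exists>e>0. ball (x i) e \<subseteq> X i" for i
  proof -
    have "x i \<in> X i" using X(1) by (rule PiE_mem) simp
    moreover have "open (X i)" using X(2) open_openin by blast
    ultimately show ?thesis by (simp add: open_contains_ball)
  qed
  then obtain e where e: "\<forall>i. e i > 0 \<and> ball (x i) (e i) \<subseteq> X i" by metis
  define B where "B = PiE I (\<lambda>i. {x i - e i <..< x i + e i})"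
  have "B \<subseteq> PiE UNIV X"
  proof (intro subsetI PiE_I)
    fix R i assume R: "R \<in> B"
    show "R i \<in> X i"
    proof (cases "i \<in> I")
      case True
      have "R i \<in> {x i - e i <..< x i + e i}" using R True unfolding B_def by (rule PiE_mem)
      then have "R i \<in> ball (x i) (e i)" by (auto simp: dist_real_def)
      moreover have "ball (x i) (e i) \<subseteq> X i" using e by blast
      ultimately show ?thesis by blast
    next
      case False
      have "R i = x i"
        using PiE_arb[OF R[unfolded B_def] False] PiE_arb[OF x False] by (simp only:)
      then show ?thesis using X(1) by (simp add: PiE_mem)
    qed
  qed simp
  then have "B \<subseteq> U" using X(3) by blast
  moreover have "B \<in> sets (PiM I (\<lambda>_. lborel))"
    unfolding B_def by (rule sets_PiM_I_finite) (use I in auto)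
  moreover have "emeasure (PiM I (\<lambda>_. lborel)) B > 0"
  proof -
    interpret product_sigma_finite "\<lambda>_::'i. lborel" by standard
    have "emeasure lborel {x i - e i <..< x i + e i} = ennreal (2 * e i)" for i
    proof -
      have "x i - e i \<le> x i + e i" using e by (simp add: less_imp_le)
      then show ?thesis by (simp add: emeasure_lborel_Ioo)
    qed
    then have "emeasure (PiM I (\<lambda>_. lborel)) B = (\<Prod>i\<in>I. ennreal (2 * e i))"
      using emeasure_PiM[OF I, of "\<lambda>i. {x i - e i <..< x i + e i}"] unfolding B_def by simp
    also have "\<dots> = ennreal (\<Prod>i\<in>I. 2 * e i)"
      by (rule prod_ennreal) (use e in \<open>simp add: less_imp_le\<close>)
    also have "\<dots> > 0" using e by (simp add: prod_pos)
    finally show ?thesis .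
  qed
  ultimately show ?thesis by blast
qed

section \<open>A point of \<open>Good\<close> on the diagonal\<close>

text \<open>A nonempty finite sum \<open>\<Sum> c_i (-1)^{q_i} t^{2q_i+1} (1-t^2)^{e_i}\<close> with positive
  coefficients is \<open>t^{2m+1}\<close> times a function that is nonzero at \<open>0\<close>; hence for some small
  \<open>t > 0\<close> it is nonzero and smaller in modulus than any fixed power of \<open>1 - t^2\<close>.\<close>

lemma small_nonzero_value:
  fixes T :: "'a set" and c :: "'a \<Rightarrow> real" and q e :: "'a \<Rightarrow> nat" and L :: nat
  assumes fin: "finite T" and ne: "T \<noteq> {}" and cpos: "\<forall>i\<in>T. c i > 0"
  defines "f \<equiv> \<lambda>t. \<Sum>i\<in>T. c i * (-1) ^ q i * t ^ (2 * q i + 1) * (1 - t\<^sup>2) ^ e i"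
  shows "\<exists>t. 0 < t \<and> t < 1 \<and> f t \<noteq> 0 \<and> \<bar>f t\<bar> < (1 - t\<^sup>2) ^ L"
proof -
  define m where "m = Min (q ` T)"
  have mle: "\<forall>i\<in>T. m \<le> q i" using fin unfolding m_def by auto
  have "m \<in> q ` T" unfolding m_def using fin ne by (intro Min_in) auto
  then obtain i0 where i0: "i0 \<in> T" "q i0 = m" by auto
  define g where "g = (\<lambda>t::real. \<Sum>i\<in>T. c i * (-1) ^ q i * t ^ (2 * (q i - m)) * (1 - t\<^sup>2) ^ e i)"
  have fg: "f t = t ^ (2 * m + 1) * g t" for t
    unfolding f_def g_def sum_distrib_left
  proof (rule sum.cong[OF refl])
    fix i assume "i \<in> T"
    then have "2 * q i + 1 = 2 * (q i - m) + (2 * m + 1)" using mle by auto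
    then show "c i * (-1) ^ q i * t ^ (2 * q i + 1) * (1 - t\<^sup>2) ^ e i
             = t ^ (2 * m + 1) * (c i * (-1) ^ q i * t ^ (2 * (q i - m)) * (1 - t\<^sup>2) ^ e i)"
      by (simp add: power_add)
  qed
  have "g 0 = (-1) ^ m * (\<Sum>i\<in>{i\<in>T. q i = m}. c i)"
    unfolding g_def sum.inter_filter[OF fin] sum_distrib_left
    by (rule sum.cong[OF refl]) (use mle in auto)
  moreover have "(\<Sum>i\<in>{i\<in>T. q i = m}. c i) > 0"
    by (rule sum_pos) (use fin i0 cpos in auto)
  ultimately have g0: "g 0 \<noteq> 0" by simp
  define h where "h = (\<lambda>t::real. (1 - t\<^sup>2) ^ L - \<bar>t ^ (2 * m + 1) * g t\<bar>)"
  have "isCont g 0" unfolding g_def by (intro continuous_intros)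
  then have "isCont h 0" unfolding h_def by (intro continuous_intros)
  have "eventually (\<lambda>t. g t \<noteq> 0) (at 0)"
    using tendsto_imp_eventually_ne[OF \<open>isCont g 0\<close>[unfolded isCont_def] g0] .
  moreover have "eventually (\<lambda>t. h t > 0) (at 0)"
    by (rule order_tendstoD(1)[OF \<open>isCont h 0\<close>[unfolded isCont_def]]) (simp add: h_def)
  ultimately have "eventually (\<lambda>t. g t \<noteq> 0 \<and> h t > 0) (at 0)"
    by (rule eventually_conj)
  then obtain d where d: "d > 0" "\<forall>t. t \<noteq> 0 \<and> dist t 0 < d \<longrightarrow> g t \<noteq> 0 \<and> h t > 0"
    unfolding eventually_at by auto
  define t where "t = min (d / 2) (1 / 2 :: real)"
  have t: "0 < t" "t < 1" "dist t 0 < d" using d(1) unfolding t_def by auto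
  then have "g t \<noteq> 0" "h t > 0" using d(2) by auto
  then have "f t \<noteq> 0" "\<bar>f t\<bar> < (1 - t\<^sup>2) ^ L"
    unfolding fg h_def using t(1) by auto
  then show ?thesis using t(1,2) by blast
qed

text \<open>Applied to \<open>C\<close> on the diagonal (flattening the double sum over \<open>k \<in> S\<close> and
  \<open>b \<in> V(k)\<close>), this yields a diagonal point of \<open>Good\<close>.\<close>

lemma diagonal_point:
  assumes tau: "\<forall>n\<le>M + 1. \<tau> n > 0" and ne: "Sset M \<tau> \<noteq> {}"
  shows "\<exists>t. 0 < t \<and> t < 1 \<and> (\<Sum>k\<in>Sset M \<tau>. amp (M + 1) (\<lambda>_. t) k) \<noteq> 0
     \<and> \<bar>\<Sum>k\<in>Sset M \<tau>. amp (M + 1) (\<lambda>_. t) k\<bar> < (1 - t\<^sup>2) ^ (M + 1)"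
proof -
  let ?N = "M + 1"
  have SL: "k \<in> Lset ?N" if "k \<in> Sset M \<tau>" for k using that unfolding Sset_def Ltau_def by auto
  define T where "T = Sigma (Sset M \<tau>) (Vset ?N)"
  define c where "c = (\<lambda>(k, b). coef ?N k b)"
  define q where "q = (\<lambda>(k, b). sign_exp ?N k b)"
  define e where "e = (\<lambda>(k :: nat \<Rightarrow> nat, b). trans_exp ?N b)"
  have finT: "finite T" unfolding T_def using Sset_finite[OF tau] Vset_finite by auto
  obtain k0 where "k0 \<in> Sset M \<tau>" using ne by auto
  then have "(k0, uvec ?N k0) \<in> T" unfolding T_def using uvec_in_Vset SL by auto
  then have neT: "T \<noteq> {}" by auto
  have cpos: "\<forall>i\<in>T. c i > 0" unfolding T_def c_def using coef_pos by auto
  have expand: "(\<Sum>k\<in>Sset M \<tau>. amp ?N (\<lambda>_. t) k)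
      = (\<Sum>i\<in>T. c i * (-1) ^ q i * t ^ (2 * q i + 1) * (1 - t\<^sup>2) ^ e i)" for t
  proof -
    have "(\<Sum>k\<in>Sset M \<tau>. amp ?N (\<lambda>_. t) k) = (\<Sum>k\<in>Sset M \<tau>. \<Sum>b\<in>Vset ?N k.
        coef ?N k b * (-1) ^ sign_exp ?N k b * t ^ (2 * sign_exp ?N k b + 1) * (1 - t\<^sup>2) ^ trans_exp ?N b)"
      by (intro sum.cong refl amp_diagonal SL)
    also have "\<dots> = (\<Sum>(k, b)\<in>T.
        coef ?N k b * (-1) ^ sign_exp ?N k b * t ^ (2 * sign_exp ?N k b + 1) * (1 - t\<^sup>2) ^ trans_exp ?N b)"
      unfolding T_def by (rule sum.Sigma) (use Sset_finite[OF tau] Vset_finite in auto)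
    also have "\<dots> = (\<Sum>i\<in>T. c i * (-1) ^ q i * t ^ (2 * q i + 1) * (1 - t\<^sup>2) ^ e i)"
      unfolding c_def q_def e_def by (rule sum.cong[OF refl]) (auto simp: split_beta)
    finally show ?thesis .
  qed
  obtain t where "0 < t" "t < 1"
      "(\<Sum>i\<in>T. c i * (-1) ^ q i * t ^ (2 * q i + 1) * (1 - t\<^sup>2) ^ e i) \<noteq> 0"
      "\<bar>\<Sum>i\<in>T. c i * (-1) ^ q i * t ^ (2 * q i + 1) * (1 - t\<^sup>2) ^ e i\<bar> < (1 - t\<^sup>2) ^ ?N"
    using small_nonzero_value[OF finT neT cpos, of q e ?N] by blast
  then show ?thesis unfolding expand[symmetric] by blast
qed

theorem lemma3p1:
  fixes M :: nat and \<tau> :: "nat \<Rightarrow> real"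
  assumes "M \<ge> 1"
    and "\<forall>n\<le>M + 1. \<tau> n > 0"
    and "Sset M \<tau> \<noteq> {}"
  shows "Rset M \<tau> \<in> sets (lebM M) \<and> emeasure (lebM M) (Rset M \<tau>) > 0"
proof -
  note tau = assms(2)
  let ?P = "PiM {..M} (\<lambda>_::nat. lborel)"
  obtain t where t: "0 < t" "t < 1" "(\<Sum>k\<in>Sset M \<tau>. amp (M + 1) (\<lambda>_. t) k) \<noteq> 0"
     "\<bar>\<Sum>k\<in>Sset M \<tau>. amp (M + 1) (\<lambda>_. t) k\<bar> < (1 - t\<^sup>2) ^ (M + 1)"
    using diagonal_point[OF tau assms(3)] by blast
  define R0 where "R0 = restrict (\<lambda>_. t) {..M}"
  have "S_amp M \<tau> R0 = (\<Sum>k\<in>Sset M \<tau>. amp (M + 1) (\<lambda>_. t) k)"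
    unfolding S_amp_def
    by (rule sum.cong[OF refl], rule amp_indep_last) (use Sset_last_zero[OF tau] in \<open>auto simp: R0_def\<close>)
  moreover have "transm M R0 = (1 - t\<^sup>2) ^ (M + 1)" by (simp add: transm_def R0_def)
  moreover have "\<forall>i\<le>M. \<bar>R0 i\<bar> < 1" using t by (simp add: R0_def)
  ultimately have "R0 \<in> Good M \<tau>" using t unfolding Good_def by simp
  moreover have "R0 \<in> PiE {..M} (\<lambda>_. UNIV)" unfolding R0_def restrict_PiE_iff by simp
  ultimately have "\<exists>B\<in>sets ?P. B \<subseteq> Good M \<tau> \<and> emeasure ?P B > 0"
    by (intro open_contains_positive_box[OF finite_atMost open_Good])
  then obtain B where B: "B \<in> sets ?P" "B \<subseteq> Good M \<tau>" "emeasure ?P B > 0" by blast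
  have meas: "Rset M \<tau> \<in> sets ?P" by (rule Rset_measurable[OF tau])
  have "B \<subseteq> Rset M \<tau>"
    unfolding Rset_eq_Good[OF tau] using B(2) sets.sets_into_space[OF B(1)] by (simp add: space_PiM)
  then have "emeasure ?P B \<le> emeasure ?P (Rset M \<tau>)" by (rule emeasure_mono[OF _ meas])
  then have "emeasure ?P (Rset M \<tau>) > 0" using B(3) by simp
  then show ?thesis using meas by (simp add: lebM_def)
qed

end
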